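(* Let $A \in \mathbb{R}^{n\times d_1}$ and $B \in \mathbb{R}^{n\times d_2}$, and let $M = [A \;\; B] \in \mathbb{R}^{n\times(d_1+d_2)}$ be their horizontal concatenation. For a real matrix $C$ with $k$ columns write $\sigma_{\max}(C) = \max_{z\in\mathbb{R}^k,\ \|z\|=1}\|Cz\|$ and $\sigma_{\min}(C) = \min_{z\in\mathbb{R}^k,\ \|z\|=1}\|Cz\|$ (Euclidean norms), and, when $\sigma_{\min}(C)>0$, $\kappa(C) = \sigma_{\max}(C)/\sigma_{\min}(C)$. Set $$s_{\max} = \max\{\sigma_{\max}(A),\sigma_{\max}(B)\},\qquad s_{\min} = \min\{\sigma_{\min}(A),\sigma_{\min}(B)\},$$ $$\rho = \|A^\top B\|_2,\qquad \tau = \frac{\max\{\sigma_{\max}(A),\sigma_{\max}(B)\}}{\min\{\sigma_{\max}(A),\sigma_{\max}(B)\}},\qquad \kappa_{\max} = \max\{\kappa(A),\kappa(B)\}.$$ Assume $\rho < s_{\min}^2$. Then $\sigma_{\max}(M)^2 \le s_{\max}^2 + \rho$, $\sigma_{\min}(M)^2 \ge s_{\min}^2 - \rho$, and $$\kappa(M) \;\le\; \sqrt{\frac{s_{\max}^2+\rho}{s_{\min}^2-\rho}} \;\le\; \sqrt{\frac{1+\rho/s_{\max}^2}{1-\rho/s_{\min}^2}}\cdot\frac{s_{\max}}{s_{\min}} \;\le\; \tau\sqrt{\frac{1+\rho/s_{\max}^2}{1-\rho/s_{\min}^2}}\;\kappa_{\max}.$$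
   Context: $\|\cdot\|_2$ denotes the spectral (operator 2-) norm. $\sigma_{\max}$ and $\sigma_{\min}$ are the largest and smallest singular values in the sense defined in the claim (the minimum of $\|Cz\|$ over unit vectors $z$ in the column space dimension), and $\kappa$ is the spectral condition number. *)

theory Defs
  imports "HOL-Analysis.Analysis"
begin

definition sigma_max :: "real^'k^'m \<Rightarrow> real" where
  "sigma_max C = Sup {norm (C *v z) | z. norm z = 1}"

definition sigma_min :: "real^'k^'m \<Rightarrow> real" where
  "sigma_min C = Inf {norm (C *v z) | z. norm z = 1}"

definition kappa :: "real^'k^'m \<Rightarrow> real" where
  "kappa C = sigma_max C / sigma_min C"

definition spec_norm :: "real^'k^'m \<Rightarrow> real" where
  "spec_norm C = onorm (\<lambda>z. C *v z)"

definition hcat :: "real^'d1^'n \<Rightarrow> real^'d2^'n \<Rightarrow> real^('d1 + 'd2)^'n" where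
  "hcat A B = (\<chi> i. \<chi> j. (case j of Inl a \<Rightarrow> A $ i $ a | Inr b \<Rightarrow> B $ i $ b))"

end

theory Submission imports Defs begin

text \<open>Split a unit vector z into its blocks x and y, so that [A B] z = A x + B y and
  |x|^2 + |y|^2 = 1. In |A x + B y|^2 = |A x|^2 + |B y|^2 + 2 (A x)^T (B y) the first two
  terms lie between s_min^2 and s_max^2 times the weights |x|^2 and |y|^2, while the cross
  term is at most 2 \<rho> |x| |y| \<le> \<rho> in absolute value. This gives both singular value
  bounds; the rest is an algebraic identity and the estimate s_max / s_min \<le> \<tau> \<kappa>_max.\<close>

lemma ex_norm_eq_1: "\<exists>z::'a::{real_normed_vector, perfect_space}. norm z = 1"
  using vector_choose_size[of 1] by (metis zero_le_one)

lemma bdd_above_norm_matrix_vector_unit: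
  "bdd_above {norm ((C::real^'k^'m) *v z) | z. norm z = 1}"
proof (rule bdd_aboveI)
  fix r assume "r \<in> {norm (C *v z) | z. norm z = 1}"
  then obtain z where "norm z = 1" "r = norm (C *v z)" by blast
  then show "r \<le> onorm ((*v) C)"
    using onorm[of "(*v) C" z] by simp
qed

lemma norm_matrix_vector_le_sigma_max:
  "norm z = 1 \<Longrightarrow> norm ((C::real^'k^'m) *v z) \<le> sigma_max C"
  unfolding sigma_max_def
  by (rule cSup_upper) (use bdd_above_norm_matrix_vector_unit in auto)

lemma sigma_min_le_norm_matrix_vector:
  "norm z = 1 \<Longrightarrow> sigma_min (C::real^'k^'m) \<le> norm (C *v z)"
  unfolding sigma_min_def by (rule cInf_lower) (auto intro: bdd_belowI[of _ 0])

lemma sigma_max_le: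
  assumes "\<And>z. norm z = 1 \<Longrightarrow> norm ((C::real^'k^'m) *v z) \<le> c"
  shows "sigma_max C \<le> c"
proof -
  obtain z0 :: "real^'k" where "norm z0 = 1"
    using ex_norm_eq_1 by blast
  then show ?thesis
    unfolding sigma_max_def using assms by (intro cSup_least) auto
qed

lemma sigma_min_ge:
  assumes "\<And>z. norm z = 1 \<Longrightarrow> c \<le> norm ((C::real^'k^'m) *v z)"
  shows "c \<le> sigma_min C"
proof -
  obtain z0 :: "real^'k" where "norm z0 = 1"
    using ex_norm_eq_1 by blast
  then show ?thesis
    unfolding sigma_min_def using assms by (intro cInf_greatest) auto
qed

lemma sigma_min_nonneg: "0 \<le> sigma_min (C::real^'k^'m)"
  by (rule sigma_min_ge) simp

lemma sigma_min_le_sigma_max: "sigma_min (C::real^'k^'m) \<le> sigma_max C"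
proof -
  obtain z :: "real^'k" where "norm z = 1"
    using ex_norm_eq_1 by blast
  then show ?thesis
    using norm_matrix_vector_le_sigma_max[of z C] sigma_min_le_norm_matrix_vector[of z C]
    by linarith
qed

lemma sigma_max_nonneg: "0 \<le> sigma_max (C::real^'k^'m)"
  using sigma_min_nonneg sigma_min_le_sigma_max order_trans by blast

lemma spec_norm_nonneg: "0 \<le> spec_norm (C::real^'k^'m)"
  unfolding spec_norm_def by (rule onorm_pos_le) simp

lemma norm_matrix_vector_le_sigma_max_mult:
  "norm ((C::real^'k^'m) *v x) \<le> sigma_max C * norm x"
proof (cases "x = 0")
  case False
  have "norm (C *v ((1 / norm x) *\<^sub>R x)) \<le> sigma_max C"
    using False by (intro norm_matrix_vector_le_sigma_max) simp
  with False show ?thesis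
    by (simp add: matrix_vector_mult_scaleR field_simps)
qed simp

lemma sigma_min_mult_le_norm_matrix_vector:
  "sigma_min (C::real^'k^'m) * norm x \<le> norm (C *v x)"
proof (cases "x = 0")
  case False
  have "sigma_min C \<le> norm (C *v ((1 / norm x) *\<^sub>R x))"
    using False by (intro sigma_min_le_norm_matrix_vector) simp
  with False show ?thesis
    by (simp add: matrix_vector_mult_scaleR field_simps)
qed simp

lemma abs_inner_matrix_vector_le_spec_norm:
  fixes A :: "real^'d1^'n" and B :: "real^'d2^'n"
  shows "\<bar>inner (A *v x) (B *v y)\<bar> \<le> spec_norm (transpose A ** B) * norm x * norm y"
proof -
  have "inner (A *v x) (B *v y) = inner x ((transpose A ** B) *v y)"
    by (metis dot_lmul_matrix vector_transpose_matrix matrix_vector_mul_assoc)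
  also have "\<bar>\<dots>\<bar> \<le> norm x * norm ((transpose A ** B) *v y)"
    by (rule Cauchy_Schwarz_ineq2)
  also have "\<dots> \<le> norm x * (spec_norm (transpose A ** B) * norm y)"
    unfolding spec_norm_def by (intro mult_left_mono onorm) auto
  finally show ?thesis by (simp add: mult_ac)
qed

lemma sum_UNIV_Plus:
  "(\<Sum>j\<in>UNIV. f j) = (\<Sum>a\<in>UNIV. f (Inl a)) + (\<Sum>b\<in>UNIV. f (Inr b))"
  for f :: "'a::finite + 'b::finite \<Rightarrow> 'c::comm_monoid_add"
  using sum.Plus[of "UNIV::'a set" "UNIV::'b set" f] by (simp add: comp_def)

lemma hcat_mult_vector:
  "hcat A B *v z = A *v (\<chi> a. z $ Inl a) + B *v (\<chi> b. z $ Inr b)"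
  unfolding hcat_def matrix_vector_mult_def by (simp add: vec_eq_iff sum_UNIV_Plus)

lemma norm_Plus_vector_sq:
  "(norm (z::real^('a::finite+'b::finite)))\<^sup>2 = (norm (\<chi> a. z $ Inl a))\<^sup>2 + (norm (\<chi> b. z $ Inr b))\<^sup>2"
  unfolding power2_norm_eq_inner inner_vec_def by (simp add: sum_UNIV_Plus)

lemma norm_add_sq_eq:
  "(norm (u + v))\<^sup>2 = (norm u)\<^sup>2 + (norm v)\<^sup>2 + 2 * inner u v" for u v :: "'a::real_inner"
  using dot_norm[of u v] by simp

lemma norm_sq_matrix_vector_le:
  assumes "sigma_max (C::real^'k^'m) \<le> s"
  shows "(norm (C *v x))\<^sup>2 \<le> s\<^sup>2 * (norm x)\<^sup>2"
proof -
  have "norm (C *v x) \<le> s * norm x"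
    using norm_matrix_vector_le_sigma_max_mult[of C x] assms
    by (meson mult_right_mono norm_ge_zero order_trans)
  then show ?thesis
    by (metis norm_ge_zero power_mono power_mult_distrib)
qed

lemma norm_sq_matrix_vector_ge:
  assumes "0 \<le> s" "s \<le> sigma_min (C::real^'k^'m)"
  shows "s\<^sup>2 * (norm x)\<^sup>2 \<le> (norm (C *v x))\<^sup>2"
proof -
  have "s * norm x \<le> norm (C *v x)"
    using sigma_min_mult_le_norm_matrix_vector[of C x] assms(2)
    by (meson mult_right_mono norm_ge_zero order_trans)
  then show ?thesis
    using assms(1) by (metis mult_nonneg_nonneg norm_ge_zero power_mono power_mult_distrib)
qed

lemma two_abs_inner_matrix_vector_le:
  fixes A :: "real^'d1^'n" and B :: "real^'d2^'n"
  shows "2 * \<bar>inner (A *v x) (B *v y)\<bar>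
           \<le> spec_norm (transpose A ** B) * ((norm x)\<^sup>2 + (norm y)\<^sup>2)"
proof -
  let ?\<rho> = "spec_norm (transpose A ** B)"
  have "2 * \<bar>inner (A *v x) (B *v y)\<bar> \<le> ?\<rho> * (2 * norm x * norm y)"
    using abs_inner_matrix_vector_le_spec_norm[of A x B y] by (simp add: mult_ac)
  also have "\<dots> \<le> ?\<rho> * ((norm x)\<^sup>2 + (norm y)\<^sup>2)"
    by (intro mult_left_mono sum_squares_bound spec_norm_nonneg)
  finally show ?thesis .
qed

lemma norm_sq_hcat_mult_vector_le:
  fixes A :: "real^'d1^'n" and B :: "real^'d2^'n"
  shows "(norm (hcat A B *v z))\<^sup>2
           \<le> ((max (sigma_max A) (sigma_max B))\<^sup>2 + spec_norm (transpose A ** B)) * (norm z)\<^sup>2"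
proof -
  define x y where "x = (\<chi> a. z $ Inl a)" and "y = (\<chi> b. z $ Inr b)"
  let ?s = "max (sigma_max A) (sigma_max B)"
  have "(norm (A *v x))\<^sup>2 \<le> ?s\<^sup>2 * (norm x)\<^sup>2" "(norm (B *v y))\<^sup>2 \<le> ?s\<^sup>2 * (norm y)\<^sup>2"
    by (simp_all add: norm_sq_matrix_vector_le)
  moreover have "2 * inner (A *v x) (B *v y)
                   \<le> spec_norm (transpose A ** B) * ((norm x)\<^sup>2 + (norm y)\<^sup>2)"
    using two_abs_inner_matrix_vector_le[of A x B y] by linarith
  ultimately show ?thesis
    unfolding hcat_mult_vector norm_Plus_vector_sq[of z] norm_add_sq_eq x_def[symmetric] y_def[symmetric]
    by (simp add: algebra_simps)
qed

lemma norm_sq_hcat_mult_vector_ge: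
  fixes A :: "real^'d1^'n" and B :: "real^'d2^'n"
  shows "((min (sigma_min A) (sigma_min B))\<^sup>2 - spec_norm (transpose A ** B)) * (norm z)\<^sup>2
           \<le> (norm (hcat A B *v z))\<^sup>2"
proof -
  define x y where "x = (\<chi> a. z $ Inl a)" and "y = (\<chi> b. z $ Inr b)"
  let ?s = "min (sigma_min A) (sigma_min B)"
  have "?s \<ge> 0" by (simp add: sigma_min_nonneg)
  then have "?s\<^sup>2 * (norm x)\<^sup>2 \<le> (norm (A *v x))\<^sup>2" "?s\<^sup>2 * (norm y)\<^sup>2 \<le> (norm (B *v y))\<^sup>2"
    by (simp_all add: norm_sq_matrix_vector_ge)
  moreover have "- (spec_norm (transpose A ** B) * ((norm x)\<^sup>2 + (norm y)\<^sup>2))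
                   \<le> 2 * inner (A *v x) (B *v y)"
    using two_abs_inner_matrix_vector_le[of A x B y] by linarith
  ultimately show ?thesis
    unfolding hcat_mult_vector norm_Plus_vector_sq[of z] norm_add_sq_eq x_def[symmetric] y_def[symmetric]
    by (simp add: algebra_simps)
qed

lemma sigma_max_sq_le:
  assumes "\<And>z. norm z = 1 \<Longrightarrow> (norm ((C::real^'k^'m) *v z))\<^sup>2 \<le> c"
  shows "(sigma_max C)\<^sup>2 \<le> c"
proof -
  obtain z0 :: "real^'k" where "norm z0 = 1"
    using ex_norm_eq_1 by blast
  then have "0 \<le> c"
    using assms[of z0] by (meson order_trans zero_le_power2)
  have "sigma_max C \<le> sqrt c"
    using assms by (intro sigma_max_le) (simp add: real_le_rsqrt)
  then have "(sigma_max C)\<^sup>2 \<le> (sqrt c)\<^sup>2"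
    by (intro power_mono sigma_max_nonneg)
  with \<open>0 \<le> c\<close> show ?thesis by simp
qed

lemma sigma_min_sq_ge:
  assumes "\<And>z. norm z = 1 \<Longrightarrow> c \<le> (norm ((C::real^'k^'m) *v z))\<^sup>2"
  shows "c \<le> (sigma_min C)\<^sup>2"
proof (cases "0 \<le> c")
  case True
  have "sqrt c \<le> sigma_min C"
    using assms by (intro sigma_min_ge) (simp add: real_le_lsqrt)
  then have "(sqrt c)\<^sup>2 \<le> (sigma_min C)\<^sup>2"
    by (intro power_mono real_sqrt_ge_zero True)
  with True show ?thesis by simp
next
  case False
  then show ?thesis by (meson order_trans zero_le_power2 linorder_not_le less_imp_le)
qed

lemma sigma_max_hcat_sq_le:
  fixes A :: "real^'d1^'n" and B :: "real^'d2^'n"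
  shows "(sigma_max (hcat A B))\<^sup>2
           \<le> (max (sigma_max A) (sigma_max B))\<^sup>2 + spec_norm (transpose A ** B)"
proof (rule sigma_max_sq_le)
  fix z :: "real^('d1 + 'd2)" assume "norm z = 1"
  then show "(norm (hcat A B *v z))\<^sup>2
               \<le> (max (sigma_max A) (sigma_max B))\<^sup>2 + spec_norm (transpose A ** B)"
    using norm_sq_hcat_mult_vector_le[of A B z] by simp
qed

lemma sigma_min_hcat_sq_ge:
  fixes A :: "real^'d1^'n" and B :: "real^'d2^'n"
  shows "(min (sigma_min A) (sigma_min B))\<^sup>2 - spec_norm (transpose A ** B)
           \<le> (sigma_min (hcat A B))\<^sup>2"
proof (rule sigma_min_sq_ge)
  fix z :: "real^('d1 + 'd2)" assume "norm z = 1"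
  then show "(min (sigma_min A) (sigma_min B))\<^sup>2 - spec_norm (transpose A ** B)
               \<le> (norm (hcat A B *v z))\<^sup>2"
    using norm_sq_hcat_mult_vector_ge[of A B z] by simp
qed

lemma kappa_le_sqrt_div:
  assumes "(sigma_max C)\<^sup>2 \<le> u" "l \<le> (sigma_min C)\<^sup>2" "0 < l"
  shows "kappa (C::real^'k^'m) \<le> sqrt (u / l)"
proof -
  have "0 \<le> u"
    using assms(1) by (meson order_trans zero_le_power2)
  have "sigma_max C \<le> sqrt u" "sqrt l \<le> sigma_min C"
    using assms \<open>0 \<le> u\<close> sigma_max_nonneg[of C] sigma_min_nonneg[of C]
    by (auto simp: real_le_rsqrt real_le_lsqrt)
  then have "sigma_max C / sigma_min C \<le> sqrt u / sqrt l"
    using assms(3) \<open>0 \<le> u\<close> sigma_max_nonneg[of C] by (intro frac_le) auto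
  then show ?thesis
    by (simp add: kappa_def real_sqrt_divide)
qed

lemma sqrt_perturbed_ratio_eq:
  fixes s m \<rho> :: real
  assumes "0 < s" "0 < m" "\<rho> < m\<^sup>2"
  shows "sqrt ((s\<^sup>2 + \<rho>) / (m\<^sup>2 - \<rho>)) = sqrt ((1 + \<rho> / s\<^sup>2) / (1 - \<rho> / m\<^sup>2)) * (s / m)"
proof -
  have ratio_eq: "(s\<^sup>2 + \<rho>) / (m\<^sup>2 - \<rho>) = (1 + \<rho> / s\<^sup>2) / (1 - \<rho> / m\<^sup>2) * (s / m)\<^sup>2"
    using assms by (simp add: field_simps power2_eq_square)
  show ?thesis
    unfolding ratio_eq real_sqrt_mult using assms by simp
qed

text \<open>If min(b1, b2) = b_i, then max a / b_i = (max a / min a) (min a / b_i) with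
  min a \<le> a_i.\<close>
lemma max_div_min_le_ratio_mult_max_div:
  fixes a1 a2 b1 b2 :: real
  assumes "0 < b1" "b1 \<le> a1" "0 < b2" "b2 \<le> a2"
  shows "max a1 a2 / min b1 b2 \<le> max a1 a2 / min a1 a2 * max (a1 / b1) (a2 / b2)"
proof -
  have cancel: "a / c * (c / b) = a / b" if "c \<noteq> 0" for a b c :: real
    using that by simp
  have "min a1 a2 / min b1 b2 \<le> max (a1 / b1) (a2 / b2)"
  proof (cases "b1 \<le> b2")
    case True
    then have "min a1 a2 / min b1 b2 \<le> a1 / b1"
      using assms by (simp add: divide_right_mono)
    then show ?thesis by linarith
  next
    case False
    then have "min a1 a2 / min b1 b2 \<le> a2 / b2"
      using assms by (simp add: divide_right_mono)
    then show ?thesis by linarith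
  qed
  moreover have "0 < min a1 a2"
    using assms by simp
  ultimately have "max a1 a2 / min a1 a2 * (min a1 a2 / min b1 b2)
                     \<le> max a1 a2 / min a1 a2 * max (a1 / b1) (a2 / b2)"
    by (intro mult_left_mono) auto
  also have "max a1 a2 / min a1 a2 * (min a1 a2 / min b1 b2) = max a1 a2 / min b1 b2"
    using \<open>0 < min a1 a2\<close> by (intro cancel) linarith
  finally show ?thesis .
qed

theorem mainTheorem1:
  fixes A :: "real^'d1^'n" and B :: "real^'d2^'n"
  defines "M \<equiv> hcat A B"
    and "smax \<equiv> max (sigma_max A) (sigma_max B)"
    and "smin \<equiv> min (sigma_min A) (sigma_min B)"
    and "\<rho> \<equiv> spec_norm (transpose A ** B)"
    and "\<tau> \<equiv> max (sigma_max A) (sigma_max B) / min (sigma_max A) (sigma_max B)"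
    and "kmax \<equiv> max (kappa A) (kappa B)"
  assumes "\<rho> < smin ^ 2"
  shows "sigma_max M ^ 2 \<le> smax ^ 2 + \<rho> \<and>
         sigma_min M ^ 2 \<ge> smin ^ 2 - \<rho> \<and>
         kappa M \<le> sqrt ((smax ^ 2 + \<rho>) / (smin ^ 2 - \<rho>)) \<and>
         sqrt ((smax ^ 2 + \<rho>) / (smin ^ 2 - \<rho>))
           \<le> sqrt ((1 + \<rho> / smax ^ 2) / (1 - \<rho> / smin ^ 2)) * (smax / smin) \<and>
         sqrt ((1 + \<rho> / smax ^ 2) / (1 - \<rho> / smin ^ 2)) * (smax / smin)
           \<le> \<tau> * sqrt ((1 + \<rho> / smax ^ 2) / (1 - \<rho> / smin ^ 2)) * kmax"
proof -
  have upper: "sigma_max M ^ 2 \<le> smax ^ 2 + \<rho>" and lower: "smin ^ 2 - \<rho> \<le> sigma_min M ^ 2"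
    unfolding M_def smax_def smin_def \<rho>_def
    by (rule sigma_max_hcat_sq_le sigma_min_hcat_sq_ge)+
  have "0 \<le> \<rho>" "0 \<le> smin"
    unfolding \<rho>_def smin_def by (simp_all add: spec_norm_nonneg sigma_min_nonneg)
  with \<open>\<rho> < smin ^ 2\<close> have "0 < smin"
    by (cases "smin = 0") auto
  then have "0 < sigma_min A" "0 < sigma_min B"
    unfolding smin_def by simp_all
  then have "0 < smax" and ratio: "smax / smin \<le> \<tau> * kmax"
    using sigma_min_le_sigma_max[of A] sigma_min_le_sigma_max[of B]
      max_div_min_le_ratio_mult_max_div[of "sigma_min A" "sigma_max A" "sigma_min B" "sigma_max B"]
    unfolding smin_def smax_def \<tau>_def kmax_def kappa_def by auto
  then have "sqrt ((smax ^ 2 + \<rho>) / (smin ^ 2 - \<rho>))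
               = sqrt ((1 + \<rho> / smax ^ 2) / (1 - \<rho> / smin ^ 2)) * (smax / smin)"
    using \<open>0 < smin\<close> \<open>\<rho> < smin ^ 2\<close> by (intro sqrt_perturbed_ratio_eq)
  moreover have "kappa M \<le> sqrt ((smax ^ 2 + \<rho>) / (smin ^ 2 - \<rho>))"
    using upper lower \<open>\<rho> < smin ^ 2\<close> by (intro kappa_le_sqrt_div) auto
  moreover have "sqrt ((1 + \<rho> / smax ^ 2) / (1 - \<rho> / smin ^ 2)) * (smax / smin)
                   \<le> sqrt ((1 + \<rho> / smax ^ 2) / (1 - \<rho> / smin ^ 2)) * (\<tau> * kmax)"
    using ratio \<open>0 \<le> \<rho>\<close> \<open>0 < smin\<close> \<open>\<rho> < smin ^ 2\<close>
    by (intro mult_left_mono real_sqrt_ge_zero divide_nonneg_pos) (simp_all add: field_simps)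
  ultimately show ?thesis
    using upper lower by (simp add: mult_ac)
qed

end
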